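(* Let $m=m_n\ge 1$ and $F=F_n=f^{(1)}\times\cdots\times f^{(m)}$ be such that $(F)_2\lesssim(F)_0$. Then, as $n\to\infty$, \[ \mathbb{P}(H^*_{nmF} \text{ is connected}) \to \begin{cases} 0 & \text{if } \log n - \frac{m}{n}(F)_1 \to +\infty,\\ 1 & \text{if } \log n - \frac{m}{n}(F)_1 \to -\infty.\end{cases} \]
   Context: Shotgun random hypergraph: given integers $n,m\ge1$ and probability distributions $f^{(1)},\dots,f^{(m)}$ on $\{0,\dots,n\}$, write $F=f^{(1)}\times\cdots\times f^{(m)}$. $H^*_{nmF}$ is the random hypergraph with node set $\{1,\dots,n\}$ and hyperedge set $\{V_1,\dots,V_m\}$ (duplicates merged), where $V_1,\dots,V_m\subset\{1,\dots,n\}$ are mutually independent and $\mathbb{P}(V_k=A)=f^{(k)}(|A|)\binom{n}{|A|}^{-1}$. A hypergraph on node set $V$ is connected if for every partition of $V$ into nonempty sets $V_1',V_2'$ some hyperedge meets both. Moments: $(F)_r=\frac1m\sum_{k=1}^m\sum_{x=2}^n x^r f^{(k)}(x)$. $a_n\lesssim b_n$ means $\limsup a_n/|b_n|<\infty$. *)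

theory Defs
  imports "HOL-Analysis.Analysis" "HOL-Library.Landau_Symbols"
begin

definition hg_connected :: "'a set \<Rightarrow> 'a set set \<Rightarrow> bool" where
  "hg_connected V E \<longleftrightarrow>
     (\<forall>V1 V2. V1 \<noteq> {} \<and> V2 \<noteq> {} \<and> V1 \<inter> V2 = {} \<and> V1 \<union> V2 = V \<longrightarrow>
        (\<exists>e\<in>E. e \<inter> V1 \<noteq> {} \<and> e \<inter> V2 \<noteq> {}))"

definition is_distr :: "nat \<Rightarrow> (nat \<Rightarrow> real) \<Rightarrow> bool" where
  "is_distr n p \<longleftrightarrow> (\<forall>x. 0 \<le> p x) \<and> (\<Sum>x\<le>n. p x) = 1"

text \<open>P(V = A) = p(|A|) / binom(n,|A|) for A a subset of {1..n}.\<close>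
definition edge_prob :: "nat \<Rightarrow> (nat \<Rightarrow> real) \<Rightarrow> nat set \<Rightarrow> real" where
  "edge_prob n p A = p (card A) / real (n choose card A)"

text \<open>Probability that the shotgun random hypergraph H*_{nmF} is connected;
  F k is the distribution f^(k), k = 1..m. The hyperedge set is the image of
  the m independent random sets (duplicates merged).\<close>
definition conn_prob :: "nat \<Rightarrow> nat \<Rightarrow> (nat \<Rightarrow> nat \<Rightarrow> real) \<Rightarrow> real" where
  "conn_prob n m F =
     (\<Sum>V\<in>PiE {1..m} (\<lambda>_. Pow {1..n}).
        (\<Prod>k\<in>{1..m}. edge_prob n (F k) (V k)) *
        (if hg_connected {1..n} (V ` {1..m}) then 1 else 0))"

definition moment :: "nat \<Rightarrow> nat \<Rightarrow> nat \<Rightarrow> (nat \<Rightarrow> nat \<Rightarrow> real) \<Rightarrow> real" where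
  "moment r n m F = (1 / real m) * (\<Sum>k\<in>{1..m}. \<Sum>x\<in>{2..n}. real x ^ r * F k x)"

end

theory Submission
  imports Defs
begin

text \<open>
  Write \<open>S\<^sub>r = m (F)\<^sub>r\<close>. A fixed vertex is isolated with probability about
  \<open>exp (- S\<^sub>1 / n)\<close>, so the expected number of isolated vertices is about
  \<open>exp (log n - S\<^sub>1 / n)\<close>. If this tends to infinity, the second moment method shows that
  some vertex is isolated with high probability. If it tends to zero, a union bound over all
  cuts \<open>(S, V - S)\<close> with \<open>|S| = s \<le> n/2\<close> applies: no hyperedge crosses such a cut with
  probability at most \<open>exp (- s S\<^sub>1 / n (1 - o(1)))\<close> when \<open>s\<close> is small, which beats
  \<open>binom n s \<le> (e n / s)\<^sup>s\<close>, and at most \<open>exp (- s S\<^sub>0 / n)\<close>, which beats \<open>2\<^sup>n\<close> when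
  \<open>s\<close> is a fixed fraction of \<open>n\<close>. The hypothesis \<open>(F)\<^sub>2 \<lesssim> (F)\<^sub>0\<close> bounds all error
  terms by multiples of \<open>S\<^sub>1 / n\<close>.
\<close>

lemma prod_of_bool:
  "finite A \<Longrightarrow> (\<Prod>x\<in>A. of_bool (P x) :: 'b :: comm_semiring_1) = of_bool (\<forall>x\<in>A. P x)"
  by (induction A rule: finite_induct) auto

lemma sum_atMost_split_0_1:
  fixes h :: "nat \<Rightarrow> real"
  assumes "1 \<le> n"
  shows "(\<Sum>x\<le>n. h x) = h 0 + h 1 + (\<Sum>x=2..n. h x)"
proof -
  have "{..n} = insert 0 (insert 1 {2..n})" using assms by auto
  then show ?thesis by simp
qed

lemma sum_Pow_card:
  assumes "finite U"
  shows "(\<Sum>A\<in>Pow U. h (card A)) = (\<Sum>x\<le>card U. of_nat (card U choose x) * h x)"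
proof -
  have "(\<Sum>A\<in>Pow U. h (card A)) = (\<Sum>x\<le>card U. \<Sum>A\<in>{A\<in>Pow U. card A = x}. h (card A))"
    using assms by (intro sum.group[symmetric]) (auto intro: card_mono)
  also have "\<dots> = (\<Sum>x\<le>card U. of_nat (card U choose x) * h x)"
  proof (rule sum.cong[OF refl])
    fix x
    have "{A\<in>Pow U. card A = x} = {B. B \<subseteq> U \<and> card B = x}" by auto
    then show "(\<Sum>A\<in>{A\<in>Pow U. card A = x}. h (card A)) = of_nat (card U choose x) * h x"
      using n_subsets[OF assms, of x] by simp
  qed
  finally show ?thesis .
qed

lemma binomial_ratio_le_power:
  assumes "a \<le> n"
  shows "real (a choose x) / real (n choose x) \<le> (real a / real n) ^ x"
proof (cases "x \<le> a")
  case False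
  then show ?thesis by (simp add: binomial_eq_0)
next
  case True
  have "real (a choose x) * real n ^ x = (\<Prod>i = 0..<x. real (a - i) * real n / real (x - i))"
    using True by (simp add: binomial_altdef_of_nat prod.distrib prod_dividef)
  also have "\<dots> \<le> (\<Prod>i = 0..<x. real (n - i) * real a / real (x - i))"
  proof (rule prod_mono)
    fix i assume i: "i \<in> {0..<x}"
    have "real (a - i) * real n \<le> real (n - i) * real a"
      using i True assms mult_right_mono[of "real a" "real n" "real i"]
      by (simp add: of_nat_diff algebra_simps)
    then show "0 \<le> real (a - i) * real n / real (x - i) \<and>
       real (a - i) * real n / real (x - i) \<le> real (n - i) * real a / real (x - i)"
      by (auto intro: divide_right_mono)
  qed
  also have "\<dots> = real (n choose x) * real a ^ x"
    using True assms by (simp add: binomial_altdef_of_nat prod.distrib prod_dividef)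
  finally have "real (a choose x) * real n ^ x \<le> real (n choose x) * real a ^ x" .
  moreover have "real (n choose x) > 0" using True assms by simp
  ultimately show ?thesis
    using True assms by (cases "n = 0") (simp_all add: field_simps power_divide)
qed

lemma binomial_ratio_minus_one:
  assumes "x \<le> n"
  shows "real (n - 1 choose x) / real (n choose x) = 1 - real x / real n"
proof -
  have "real (n - x) * real (n choose x) = real n * real (n - 1 choose x)"
    using binomial_absorb_comp[of n x] by (metis of_nat_mult)
  moreover have "real (n choose x) > 0" using assms by simp
  ultimately show ?thesis
    using assms by (cases "n = 0") (auto simp: field_simps of_nat_diff)
qed

lemma binomial_ratio_minus_two:
  assumes "x \<le> n" "2 \<le> n"
  shows "real (n - 2 choose x) / real (n choose x)
         = 1 - 2 * real x / real n + real x * (real x - 1) / (real n * (real n - 1))"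
proof (cases "x = n")
  case True
  then show ?thesis using assms by (simp add: binomial_eq_0 field_simps)
next
  case False
  then have x: "x \<le> n - 1" using assms by simp
  have "real (n - 1 choose x) > 0" using x by simp
  then have "real (n - 2 choose x) / real (n choose x)
        = real (n - 1 - 1 choose x) / real (n - 1 choose x) * (real (n - 1 choose x) / real (n choose x))"
    by (simp add: numeral_2_eq_2)
  also have "\<dots> = (1 - real x / (real n - 1)) * (1 - real x / real n)"
    using x assms by (simp only: binomial_ratio_minus_one of_nat_diff) simp
  also have "\<dots> = 1 - 2 * real x / real n + real x * (real x - 1) / (real n * (real n - 1))"
  proof -
    have "real n - 1 > 0" "real n > 0" using assms by auto
    then show ?thesis by (simp add: field_simps)
  qed
  finally show ?thesis .
qed

lemma one_minus_power_le:
  fixes t :: real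
  assumes "0 \<le> t" "t \<le> 1"
  shows "(1 - t) ^ x \<le> 1 - real x * t + real x * (real x - 1) / 2 * t\<^sup>2"
proof (induction x)
  case (Suc x)
  have "(1 - t) ^ Suc x \<le> (1 - t) * (1 - real x * t + real x * (real x - 1) / 2 * t\<^sup>2)"
    using Suc assms by (simp add: mult_left_mono)
  also have "\<dots> = 1 - real (Suc x) * t + real (Suc x) * (real (Suc x) - 1) / 2 * t\<^sup>2
                    - real x * (real x - 1) / 2 * t ^ 3"
    by (simp add: power2_eq_square power3_eq_cube field_simps)
  also have "\<dots> \<le> 1 - real (Suc x) * t + real (Suc x) * (real (Suc x) - 1) / 2 * t\<^sup>2"
    using assms by (cases x) auto
  finally show ?case .
qed simp

text \<open>\<open>(binom s x + binom (n - s) x) / binom n x\<close> is the probability that a uniformly random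
  \<open>x\<close>-subset of an \<open>n\<close>-set lies on one side of a fixed cut \<open>(S, V - S)\<close> with \<open>|S| = s\<close>.\<close>

lemma crossing_ratio_bounds:
  assumes x: "2 \<le> x" "x \<le> n" and s: "1 \<le> s" "2 * s \<le> n"
  defines "t \<equiv> real s / real n"
  shows "real x * t - (real x)\<^sup>2 * t\<^sup>2 \<le> 1 - (real (s choose x) + real (n - s choose x)) / real (n choose x)"
    and "t \<le> 1 - (real (s choose x) + real (n - s choose x)) / real (n choose x)"
proof -
  have t: "0 \<le> t" "t \<le> 1/2" using s unfolding t_def by (auto simp: field_simps)
  have "real (s choose x) / real (n choose x) \<le> t ^ x"
    using binomial_ratio_le_power[of s n x] s unfolding t_def by simp
  also have "\<dots> \<le> t\<^sup>2" using power_decreasing[of 2 x t] x t by simp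
  finally have r1: "real (s choose x) / real (n choose x) \<le> t\<^sup>2" .
  have r2: "real (n - s choose x) / real (n choose x) \<le> (1 - t) ^ x"
    using binomial_ratio_le_power[of "n - s" n x] s x
    by (simp add: t_def of_nat_diff diff_divide_distrib)
  have split: "(real (s choose x) + real (n - s choose x)) / real (n choose x)
     = real (s choose x) / real (n choose x) + real (n - s choose x) / real (n choose x)"
    by (simp add: add_divide_distrib)
  have "(1 - t) ^ x \<le> 1 - real x * t + real x * (real x - 1) / 2 * t\<^sup>2"
    using one_minus_power_le t by simp
  moreover have "real x * (real x - 1) / 2 * t\<^sup>2 + t\<^sup>2 \<le> (real x)\<^sup>2 * t\<^sup>2"
  proof -
    have "real x * (real x - 1) / 2 + 1 \<le> (real x)\<^sup>2"
    proof -
      have "2 \<le> real x" "0 \<le> real x * real x" using x by auto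
      then have "2 \<le> real x + real x * real x" by linarith
      then show ?thesis by (simp add: power2_eq_square field_simps)
    qed
    from mult_right_mono[OF this, of "t\<^sup>2"] show ?thesis by (simp add: algebra_simps)
  qed
  ultimately show "real x * t - (real x)\<^sup>2 * t\<^sup>2 \<le> 1 - (real (s choose x) + real (n - s choose x)) / real (n choose x)"
    using r1 r2 split by linarith
  have "(1 - t) ^ x \<le> (1 - t)\<^sup>2" using power_decreasing[of 2 x "1 - t"] x t by simp
  moreover have "t\<^sup>2 + (1 - t)\<^sup>2 \<le> 1 - t"
    using mult_nonneg_nonpos[of t "2 * t - 1"] t by (simp add: power2_eq_square algebra_simps)
  ultimately show "t \<le> 1 - (real (s choose x) + real (n - s choose x)) / real (n choose x)"
    using r1 r2 split by linarith
qed

lemma power_div_fact_le_exp: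
  fixes x :: real
  assumes "0 \<le> x"
  shows "x ^ s / fact s \<le> exp x"
proof -
  have e: "(\<lambda>n. x ^ n / fact n) sums exp x"
    using exp_converges[of x] by (simp add: divide_inverse mult.commute)
  show ?thesis
    using sum_le_suminf[OF sums_summable[OF e], of "{s}"] sums_unique[OF e] assms by simp
qed

lemma binomial_le_exp:
  assumes s: "1 \<le> s" "s \<le> n"
  shows "real (n choose s) \<le> exp (real s * (1 + ln (real n) - ln (real s)))"
proof -
  have "fact n = ((n choose s) * fact s) * fact (n - s)"
    using binomial_fact_lemma[OF s(2)] by (simp add: ac_simps)
  then have "(n choose s) * fact s = fact n div fact (n - s)" by simp
  then have "(n choose s) * fact s \<le> n ^ s" using fact_div_fact_le_pow[OF s(2)] by simp
  then have A: "real (n choose s) * fact s \<le> real n ^ s"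
    by (metis of_nat_fact of_nat_le_iff of_nat_mult of_nat_power)
  have np: "real s > 0" "real n > 0" using s by auto
  have "real (n choose s) \<le> real n ^ s / fact s" using A by (simp add: field_simps)
  also have "\<dots> = (real n / real s) ^ s * (real s ^ s / fact s)" using np by (simp add: power_divide)
  also have "\<dots> \<le> (real n / real s) ^ s * exp (real s)"
    using power_div_fact_le_exp np by (intro mult_left_mono) auto
  also have "(real n / real s) ^ s = exp (real s * ln (real n / real s))"
    using np by (simp add: exp_of_nat_mult)
  also have "ln (real n / real s) = ln (real n) - ln (real s)"
    using np by (simp add: ln_div)
  also have "exp (real s * (ln (real n) - ln (real s))) * exp (real s)
      = exp (real s * (1 + ln (real n) - ln (real s)))"
    by (simp add: exp_add[symmetric] algebra_simps)
  finally show ?thesis .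
qed

lemma first_moment_sq_le:
  fixes F :: "nat \<Rightarrow> real"
  assumes "\<And>x. 0 \<le> F x"
  shows "(\<Sum>x\<in>A. real x * F x)\<^sup>2 \<le> (\<Sum>x\<in>A. F x) * (\<Sum>x\<in>A. real x ^ 2 * F x)"
proof -
  have "(\<Sum>x\<in>A. real x * F x) = (\<Sum>x\<in>A. sqrt (F x) * (real x * sqrt (F x)))"
    using assms by (intro sum.cong) (auto simp: real_sqrt_mult_self mult.left_commute[of "sqrt _"])
  also have "(\<dots>)\<^sup>2 \<le> (\<Sum>x\<in>A. (sqrt (F x))\<^sup>2) * (\<Sum>x\<in>A. (real x * sqrt (F x))\<^sup>2)"
    by (rule Cauchy_Schwarz_ineq_sum)
  also have "\<dots> = (\<Sum>x\<in>A. F x) * (\<Sum>x\<in>A. real x ^ 2 * F x)"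
    using assms by (simp add: power_mult_distrib)
  finally show ?thesis .
qed

lemma prod_le_exp_sum:
  fixes b :: "'a \<Rightarrow> real"
  assumes "finite I" "\<And>k. k \<in> I \<Longrightarrow> 0 \<le> b k"
  shows "(\<Prod>k\<in>I. b k) \<le> exp (\<Sum>k\<in>I. b k - 1)"
proof -
  have "(\<Prod>k\<in>I. b k) \<le> (\<Prod>k\<in>I. exp (b k - 1))"
    using assms exp_ge_add_one_self[of "b _ - 1"] by (intro prod_mono) simp
  then show ?thesis using assms(1) by (simp add: exp_sum)
qed

lemma exp_le_prod_one_minus:
  fixes a :: "'a \<Rightarrow> real"
  assumes "finite I" "\<And>k. k \<in> I \<Longrightarrow> 0 \<le> a k \<and> a k \<le> 1/2"
  shows "exp (- (\<Sum>k\<in>I. a k) - 2 * (\<Sum>k\<in>I. (a k)\<^sup>2)) \<le> (\<Prod>k\<in>I. 1 - a k)"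
proof -
  have "exp (- (\<Sum>k\<in>I. a k) - 2 * (\<Sum>k\<in>I. (a k)\<^sup>2)) = (\<Prod>k\<in>I. exp (- a k - 2 * (a k)\<^sup>2))"
    using assms(1) by (simp add: exp_sum[symmetric] sum_subtractf sum_negf sum_distrib_left)
  also have "\<dots> \<le> (\<Prod>k\<in>I. 1 - a k)"
  proof (rule prod_mono)
    fix k assume "k \<in> I"
    then have "- a k - 2 * (a k)\<^sup>2 \<le> ln (1 - a k)" "a k < 1"
      using assms(2) ln_one_minus_pos_lower_bound by force+
    then show "0 \<le> exp (- a k - 2 * (a k)\<^sup>2) \<and> exp (- a k - 2 * (a k)\<^sup>2) \<le> 1 - a k"
      by (metis exp_ge_zero exp_le_cancel_iff exp_ln diff_gt_0_iff_gt)
  qed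
  finally show ?thesis .
qed

lemma sum_power_le_twice:
  fixes \<rho> :: real
  assumes "0 \<le> \<rho>" "\<rho> \<le> 1/2"
  shows "(\<Sum>s=1..N. \<rho> ^ s) \<le> 2 * \<rho>"
proof -
  have "(\<Sum>s=1..N. \<rho> ^ s) \<le> 2 * \<rho> - 2 * \<rho> ^ (N + 1)"
  proof (induction N)
    case (Suc N)
    have "2 * \<rho> ^ (Suc N + 1) \<le> \<rho> ^ (N + 1)"
      using assms mult_right_mono[of "2 * \<rho>" 1 "\<rho> ^ (N + 1)"] by simp
    then show ?case using Suc by simp
  qed simp
  moreover have "0 \<le> \<rho> ^ (N + 1)" using assms by simp
  ultimately show ?thesis by linarith
qed

lemma real_mult_exp_neg_tendsto_zero: "(\<lambda>n. real n * exp (- real n)) \<longlonglongrightarrow> 0"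
proof -
  have "(\<lambda>n. real n ^ 1 / exp (real n)) \<longlonglongrightarrow> 0"
    by (rule filterlim_compose[OF tendsto_power_div_exp_0 filterlim_real_sequentially])
  then show ?thesis by (simp add: exp_minus divide_inverse)
qed

lemma two_pow_mult_exp_le:
  assumes "real n * (ln 2 + 1) \<le> L"
  shows "2 ^ n * exp (- L) \<le> exp (- real n)"
proof -
  have "2 ^ n * exp (- L) = exp (real n * ln 2 - L)"
    by (simp add: exp_diff exp_of_nat_mult exp_minus divide_inverse)
  also have "\<dots> \<le> exp (- real n)" using assms by (simp add: algebra_simps)
  finally show ?thesis .
qed

lemma eventually_ln_le_sqrt:
  fixes C :: real
  assumes C: "0 < C"
  shows "eventually (\<lambda>n. C * ln (real n) \<le> 2 * sqrt (real n)) sequentially"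
proof -
  have "eventually (\<lambda>n. ln (real n) / real n powr (1/2) < 2 / C) sequentially"
    using order_tendstoD(2)[OF lim_ln_over_power[of "1/2"], of "2 / C"] C by simp
  then show ?thesis using eventually_ge_at_top[of "1::nat"]
  proof eventually_elim
    case (elim n)
    then have "ln (real n) \<le> 2 / C * sqrt (real n)" by (simp add: powr_half_sqrt field_simps)
    then show ?case using C by (simp add: field_simps)
  qed
qed

lemma second_moment_method:
  fixes w N :: "'a \<Rightarrow> real"
  assumes w0: "\<And>V. V \<in> \<Omega> \<Longrightarrow> 0 \<le> w V" and w1: "(\<Sum>V\<in>\<Omega>. w V) = 1"
    and E_pos: "0 < (\<Sum>V\<in>\<Omega>. w V * N V)"
    and N0: "\<And>V. V \<in> \<Omega> \<Longrightarrow> P V \<Longrightarrow> N V = 0"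
  shows "(\<Sum>V\<in>\<Omega>. w V * of_bool (P V))
         \<le> (\<Sum>V\<in>\<Omega>. w V * (N V)\<^sup>2) / (\<Sum>V\<in>\<Omega>. w V * N V)\<^sup>2 - 1"
proof -
  define E where "E = (\<Sum>V\<in>\<Omega>. w V * N V)"
  define E2 where "E2 = (\<Sum>V\<in>\<Omega>. w V * (N V)\<^sup>2)"
  have "E\<^sup>2 * (\<Sum>V\<in>\<Omega>. w V * of_bool (P V)) = (\<Sum>V\<in>\<Omega>. w V * (E\<^sup>2 * of_bool (P V)))"
    by (simp add: sum_distrib_left algebra_simps)
  also have "\<dots> \<le> (\<Sum>V\<in>\<Omega>. w V * (N V - E)\<^sup>2)"
    using N0 w0 by (intro sum_mono mult_left_mono) auto
  also have "\<dots> = (\<Sum>V\<in>\<Omega>. w V * (N V)\<^sup>2) - 2 * E * (\<Sum>V\<in>\<Omega>. w V * N V) + E\<^sup>2 * (\<Sum>V\<in>\<Omega>. w V)"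
    by (simp add: power2_eq_square algebra_simps sum.distrib sum_subtractf sum_distrib_left)
  also have "\<dots> = E2 - 2 * E * E + E\<^sup>2 * (\<Sum>V\<in>\<Omega>. w V)"
    unfolding E2_def E_def ..
  also have "\<dots> = E2 - E\<^sup>2" using w1 by (simp add: power2_eq_square)
  finally show ?thesis
    using E_pos unfolding E_def[symmetric] E2_def[symmetric] by (simp add: field_simps)
qed

section \<open>A single random hyperedge\<close>

lemma is_distr_nonneg: "is_distr n p \<Longrightarrow> 0 \<le> p x"
  unfolding is_distr_def by simp

lemma edge_prob_nonneg: "is_distr n p \<Longrightarrow> 0 \<le> edge_prob n p A"
  unfolding edge_prob_def is_distr_def by simp

lemma edge_prob_singleton: "i \<in> {1..n} \<Longrightarrow> edge_prob n p {i} = p 1 / real n"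
  unfolding edge_prob_def by simp

lemma sum_edge_prob_Pow:
  assumes "finite S" "card S \<le> n"
  shows "(\<Sum>A\<in>Pow S. edge_prob n p A) = (\<Sum>x\<le>n. p x * (real (card S choose x) / real (n choose x)))"
proof -
  have "(\<Sum>A\<in>Pow S. edge_prob n p A) = (\<Sum>x\<le>card S. p x * (real (card S choose x) / real (n choose x)))"
    unfolding edge_prob_def using sum_Pow_card[OF assms(1), of "\<lambda>c. p c / real (n choose c)"]
    by (simp add: algebra_simps)
  also have "\<dots> = (\<Sum>x\<le>n. p x * (real (card S choose x) / real (n choose x)))"
    using assms(2) by (intro sum.mono_neutral_left) (auto simp: binomial_eq_0)
  finally show ?thesis .
qed

lemma sum_edge_prob_total:
  assumes "is_distr n p"
  shows "(\<Sum>A\<in>Pow {1..n}. edge_prob n p A) = 1"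
  using assms unfolding is_distr_def by (subst sum_edge_prob_Pow) auto

text \<open>For a hyperedge with size distribution \<open>p\<close>: the probability that it has at least two
  vertices and contains a fixed vertex, resp. two fixed vertices.\<close>

definition touch_prob :: "nat \<Rightarrow> (nat \<Rightarrow> real) \<Rightarrow> real" where
  "touch_prob n p = (\<Sum>x=2..n. real x * p x) / real n"

definition touch_pair_prob :: "nat \<Rightarrow> (nat \<Rightarrow> real) \<Rightarrow> real" where
  "touch_pair_prob n p = (\<Sum>x=2..n. real x * (real x - 1) * p x) / (real n * (real n - 1))"

lemma touch_prob_nonneg: "is_distr n p \<Longrightarrow> 0 \<le> touch_prob n p"
  unfolding touch_prob_def by (auto intro!: sum_nonneg divide_nonneg_nonneg simp: is_distr_nonneg)

lemma touch_prob_sq_le: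
  assumes d: "is_distr n p"
  shows "(touch_prob n p)\<^sup>2 \<le> (\<Sum>x=2..n. real x ^ 2 * p x) / (real n)\<^sup>2"
proof -
  have tot: "(\<Sum>x=2..n. p x) \<le> 1"
  proof -
    have "(\<Sum>x=2..n. p x) \<le> (\<Sum>x\<le>n. p x)" using is_distr_nonneg[OF d] by (intro sum_mono2) auto
    then show ?thesis using d unfolding is_distr_def by simp
  qed
  have "(\<Sum>x=2..n. real x * p x)\<^sup>2 \<le> (\<Sum>x=2..n. p x) * (\<Sum>x=2..n. real x ^ 2 * p x)"
    using first_moment_sq_le is_distr_nonneg[OF d] by blast
  also have "\<dots> \<le> (\<Sum>x=2..n. real x ^ 2 * p x)"
    using tot is_distr_nonneg[OF d] by (intro mult_left_le_one_le sum_nonneg mult_nonneg_nonneg) auto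
  finally show ?thesis unfolding touch_prob_def by (simp add: power_divide divide_right_mono)
qed

lemma touch_pair_prob_le:
  assumes "is_distr n p" "2 \<le> n"
  shows "touch_pair_prob n p \<le> (\<Sum>x=2..n. real x ^ 2 * p x) / (real n * (real n - 1))"
  unfolding touch_pair_prob_def using assms is_distr_nonneg[OF assms(1)]
  by (intro divide_right_mono sum_mono mult_right_mono) (auto simp: power2_eq_square)

definition leaves_isolated :: "nat \<Rightarrow> nat set \<Rightarrow> bool" where
  "leaves_isolated i A \<longleftrightarrow> i \<notin> A \<or> A = {i}"

definition respects_cut :: "nat set \<Rightarrow> nat set \<Rightarrow> bool" where
  "respects_cut S A \<longleftrightarrow> A \<inter> S = {} \<or> A \<subseteq> S"

lemma sum_edge_prob_leaves_isolated:
  assumes d: "is_distr n p" and i: "i \<in> {1..n}"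
  shows "(\<Sum>A\<in>{A\<in>Pow {1..n}. leaves_isolated i A}. edge_prob n p A)
         = 1 - touch_prob n p"
proof -
  have n: "1 \<le> n" using i by simp
  have "{A\<in>Pow {1..n}. leaves_isolated i A} = insert {i} (Pow ({1..n} - {i}))"
    using i unfolding leaves_isolated_def by auto
  then have "(\<Sum>A\<in>{A\<in>Pow {1..n}. leaves_isolated i A}. edge_prob n p A)
      = p 1 / real n + (\<Sum>x\<le>n. p x * (real (n - 1 choose x) / real (n choose x)))"
    using i by (simp add: edge_prob_singleton sum_edge_prob_Pow)
  also have "(\<Sum>x\<le>n. p x * (real (n - 1 choose x) / real (n choose x)))
      = (\<Sum>x\<le>n. p x - real x * p x / real n)"
    by (intro sum.cong refl, subst binomial_ratio_minus_one) (auto simp: algebra_simps)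
  also have "\<dots> = (\<Sum>x\<le>n. p x) - (\<Sum>x\<le>n. real x * p x) / real n"
    by (simp add: sum_subtractf sum_divide_distrib)
  also have "(\<Sum>x\<le>n. real x * p x) = p 1 + (\<Sum>x=2..n. real x * p x)"
    using n by (simp add: sum_atMost_split_0_1)
  finally show ?thesis using d unfolding is_distr_def touch_prob_def by (simp add: add_divide_distrib)
qed

lemma sum_edge_prob_leaves_isolated_pair:
  assumes d: "is_distr n p" and i: "i \<in> {1..n}" and j: "j \<in> {1..n}" and ij: "i \<noteq> j"
  shows "(\<Sum>A\<in>{A\<in>Pow {1..n}. leaves_isolated i A \<and> leaves_isolated j A}. edge_prob n p A)
         = 1 - 2 * touch_prob n p + touch_pair_prob n p"
proof -
  have n: "2 \<le> n" using i j ij by auto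
  have c: "card ({1..n} - {i, j}) = n - 2" using i j ij by (subst card_Diff_subset) auto
  have "{A\<in>Pow {1..n}. leaves_isolated i A \<and> leaves_isolated j A}
        = insert {i} (insert {j} (Pow ({1..n} - {i, j})))"
    using i j ij unfolding leaves_isolated_def by auto
  then have "(\<Sum>A\<in>{A\<in>Pow {1..n}. leaves_isolated i A \<and> leaves_isolated j A}. edge_prob n p A)
      = 2 * (p 1 / real n) + (\<Sum>x\<le>n. p x * (real (n - 2 choose x) / real (n choose x)))"
    using i j ij c by (simp add: edge_prob_singleton sum_edge_prob_Pow)
  also have "(\<Sum>x\<le>n. p x * (real (n - 2 choose x) / real (n choose x)))
      = (\<Sum>x\<le>n. p x - 2 * (real x * p x) / real n
                   + real x * (real x - 1) * p x / (real n * (real n - 1)))"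
    using n by (intro sum.cong refl) (simp add: binomial_ratio_minus_two algebra_simps)
  also have "\<dots> = (\<Sum>x\<le>n. p x) - 2 * (\<Sum>x\<le>n. real x * p x) / real n
        + (\<Sum>x\<le>n. real x * (real x - 1) * p x) / (real n * (real n - 1))"
    by (simp add: sum.distrib sum_subtractf sum_divide_distrib sum_distrib_left)
  also have "(\<Sum>x\<le>n. real x * p x) = p 1 + (\<Sum>x=2..n. real x * p x)"
    using n by (simp add: sum_atMost_split_0_1)
  also have "(\<Sum>x\<le>n. real x * (real x - 1) * p x) = (\<Sum>x=2..n. real x * (real x - 1) * p x)"
    using n by (simp add: sum_atMost_split_0_1)
  finally show ?thesis
    using d unfolding is_distr_def touch_prob_def touch_pair_prob_def by (simp add: add_divide_distrib)
qed

lemma one_minus_sum_edge_prob_respects_cut: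
  assumes d: "is_distr n p" and S: "S \<subseteq> {1..n}" and n: "1 \<le> n"
  shows "1 - (\<Sum>A\<in>{A\<in>Pow {1..n}. respects_cut S A}. edge_prob n p A)
         = (\<Sum>x=2..n. p x * (1 - (real (card S choose x) + real (n - card S choose x)) / real (n choose x)))"
proof -
  have fS: "finite S" using S finite_subset by blast
  have cS: "card S \<le> n" using card_mono[OF _ S] by simp
  have cC: "card ({1..n} - S) = n - card S" using S by (simp add: card_Diff_subset fS)
  define r where "r x = (real (card S choose x) + real (n - card S choose x)) / real (n choose x)" for x
  have "{A\<in>Pow {1..n}. respects_cut S A} = Pow S \<union> Pow ({1..n} - S)"
    using S unfolding respects_cut_def by auto
  moreover have "Pow S \<inter> Pow ({1..n} - S) = {{}}" by auto
  ultimately have "(\<Sum>A\<in>{A\<in>Pow {1..n}. respects_cut S A}. edge_prob n p A)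
      = (\<Sum>A\<in>Pow S. edge_prob n p A) + (\<Sum>A\<in>Pow ({1..n} - S). edge_prob n p A) - edge_prob n p {}"
    using sum.union_inter[of "Pow S" "Pow ({1..n} - S)" "edge_prob n p"] fS by simp
  also have "\<dots> = (\<Sum>x\<le>n. p x * r x) - p 0"
    using fS cS cC by (simp add: sum_edge_prob_Pow r_def sum.distrib[symmetric]
        add_divide_distrib distrib_left) (simp add: edge_prob_def)
  also have "\<dots> = p 0 + p 1 + (\<Sum>x=2..n. p x * r x)"
    using n cS by (subst sum_atMost_split_0_1) (auto simp: r_def of_nat_diff)
  finally have "(\<Sum>A\<in>{A\<in>Pow {1..n}. respects_cut S A}. edge_prob n p A)
      = p 0 + p 1 + (\<Sum>x=2..n. p x * r x)" .
  moreover have "1 = p 0 + p 1 + (\<Sum>x=2..n. p x)"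
    using d n unfolding is_distr_def by (simp add: sum_atMost_split_0_1)
  ultimately show ?thesis unfolding r_def by (simp add: algebra_simps sum_subtractf)
qed

section \<open>Independent hyperedges\<close>

definition configs :: "nat \<Rightarrow> nat \<Rightarrow> (nat \<Rightarrow> nat set) set" where
  "configs n m = PiE {1..m} (\<lambda>_. Pow {1..n})"

definition config_prob :: "nat \<Rightarrow> nat \<Rightarrow> (nat \<Rightarrow> nat \<Rightarrow> real) \<Rightarrow> (nat \<Rightarrow> nat set) \<Rightarrow> real" where
  "config_prob n m F V = (\<Prod>k\<in>{1..m}. edge_prob n (F k) (V k))"

lemma config_prob_nonneg:
  "(\<And>k. k \<in> {1..m} \<Longrightarrow> is_distr n (F k)) \<Longrightarrow> 0 \<le> config_prob n m F V"
  unfolding config_prob_def by (auto intro!: prod_nonneg edge_prob_nonneg)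

lemma sum_config_prob_edgewise:
  "(\<Sum>V\<in>configs n m. config_prob n m F V * of_bool (\<forall>k\<in>{1..m}. P k (V k)))
   = (\<Prod>k\<in>{1..m}. \<Sum>A\<in>{A\<in>Pow {1..n}. P k A}. edge_prob n (F k) A)"
proof -
  have "(\<Prod>k\<in>{1..m}. \<Sum>A\<in>{A\<in>Pow {1..n}. P k A}. edge_prob n (F k) A)
      = (\<Prod>k\<in>{1..m}. \<Sum>A\<in>Pow {1..n}. edge_prob n (F k) A * of_bool (P k A))"
    by (simp add: Int_def)
  also have "\<dots> = (\<Sum>V\<in>configs n m. \<Prod>k\<in>{1..m}. edge_prob n (F k) (V k) * of_bool (P k (V k)))"
    unfolding configs_def by (rule prod_sum_PiE) auto
  also have "\<dots> = (\<Sum>V\<in>configs n m. config_prob n m F V * of_bool (\<forall>k\<in>{1..m}. P k (V k)))"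
    unfolding config_prob_def prod.distrib by (simp add: prod_of_bool)
  finally show ?thesis ..
qed

lemma sum_config_prob:
  assumes "\<And>k. k \<in> {1..m} \<Longrightarrow> is_distr n (F k)"
  shows "(\<Sum>V\<in>configs n m. config_prob n m F V) = 1"
proof -
  have "(\<Sum>V\<in>configs n m. config_prob n m F V)
      = (\<Prod>k\<in>{1..m}. \<Sum>A\<in>Pow {1..n}. edge_prob n (F k) A)"
    using sum_config_prob_edgewise[where P = "\<lambda>_ _. True"] by (simp del: Pow_iff)
  also have "\<dots> = 1" by (intro prod.neutral ballI sum_edge_prob_total assms)
  finally show ?thesis .
qed

lemma conn_prob_eq_sum_configs:
  "conn_prob n m F
   = (\<Sum>V\<in>configs n m. config_prob n m F V * of_bool (hg_connected {1..n} (V ` {1..m})))"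
  unfolding conn_prob_def configs_def config_prob_def of_bool_def ..

lemma conn_prob_bounds:
  assumes "\<And>k. k \<in> {1..m} \<Longrightarrow> is_distr n (F k)"
  shows "0 \<le> conn_prob n m F" "conn_prob n m F \<le> 1"
proof -
  show "0 \<le> conn_prob n m F"
    unfolding conn_prob_eq_sum_configs using config_prob_nonneg[OF assms] by (simp add: sum_nonneg)
  have "conn_prob n m F \<le> (\<Sum>V\<in>configs n m. config_prob n m F V)"
    unfolding conn_prob_eq_sum_configs using config_prob_nonneg[OF assms]
    by (intro sum_mono) (simp add: mult_left_le)
  then show "conn_prob n m F \<le> 1" using sum_config_prob[OF assms] by simp
qed

definition moment_sum :: "nat \<Rightarrow> nat \<Rightarrow> nat \<Rightarrow> (nat \<Rightarrow> nat \<Rightarrow> real) \<Rightarrow> real" where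
  "moment_sum r n m F = (\<Sum>k\<in>{1..m}. \<Sum>x=2..n. real x ^ r * F k x)"

lemma moment_eq_moment_sum: "moment r n m F = moment_sum r n m F / real m"
  unfolding moment_def moment_sum_def by simp

lemma moment_sum_nonneg:
  "(\<And>k. k \<in> {1..m} \<Longrightarrow> is_distr n (F k)) \<Longrightarrow> 0 \<le> moment_sum r n m F"
  unfolding moment_sum_def
  by (intro sum_nonneg mult_nonneg_nonneg) (auto intro: is_distr_nonneg)

lemma moment_sum_Suc_ge:
  assumes "\<And>k. k \<in> {1..m} \<Longrightarrow> is_distr n (F k)"
  shows "2 * moment_sum r n m F \<le> moment_sum (Suc r) n m F"
  unfolding moment_sum_def sum_distrib_left
proof (intro sum_mono)
  fix k x assume k: "k \<in> {1..m}" and x: "x \<in> {2..n}"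
  have "2 * real x ^ r \<le> real x * real x ^ r" using x by (intro mult_right_mono) auto
  from mult_right_mono[OF this is_distr_nonneg[OF assms[OF k]]]
  show "2 * (real x ^ r * F k x) \<le> real x ^ Suc r * F k x" by (simp add: mult.assoc)
qed

section \<open>Isolated vertices\<close>

lemma sum_touch_prob: "(\<Sum>k\<in>{1..m}. touch_prob n (F k)) = moment_sum 1 n m F / real n"
  unfolding touch_prob_def moment_sum_def by (simp add: sum_divide_distrib)

lemma sum_touch_prob_sq_le:
  assumes "\<And>k. k \<in> {1..m} \<Longrightarrow> is_distr n (F k)"
  shows "(\<Sum>k\<in>{1..m}. (touch_prob n (F k))\<^sup>2) \<le> moment_sum 2 n m F / (real n)\<^sup>2"
proof -
  have "(\<Sum>k\<in>{1..m}. (touch_prob n (F k))\<^sup>2)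
      \<le> (\<Sum>k\<in>{1..m}. (\<Sum>x=2..n. real x ^ 2 * F k x) / (real n)\<^sup>2)"
    by (intro sum_mono touch_prob_sq_le assms)
  then show ?thesis unfolding moment_sum_def by (simp add: sum_divide_distrib)
qed

lemma sum_touch_pair_prob_le:
  assumes "\<And>k. k \<in> {1..m} \<Longrightarrow> is_distr n (F k)" "2 \<le> n"
  shows "(\<Sum>k\<in>{1..m}. touch_pair_prob n (F k)) \<le> moment_sum 2 n m F / (real n * (real n - 1))"
proof -
  have "(\<Sum>k\<in>{1..m}. touch_pair_prob n (F k))
      \<le> (\<Sum>k\<in>{1..m}. (\<Sum>x=2..n. real x ^ 2 * F k x) / (real n * (real n - 1)))"
    using assms(2) by (intro sum_mono touch_pair_prob_le assms(1))
  then show ?thesis unfolding moment_sum_def by (simp add: sum_divide_distrib)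
qed

lemma connected_imp_not_isolated:
  assumes c: "hg_connected {1..n} E" and n: "2 \<le> n" and i: "i \<in> {1..n}"
  shows "\<exists>e\<in>E. \<not> leaves_isolated i e"
proof -
  have "(if i = 1 then 2 else 1) \<in> {1..n} - {i}" using n i by auto
  then have "{i} \<noteq> {} \<and> {1..n} - {i} \<noteq> {} \<and> {i} \<inter> ({1..n} - {i}) = {} \<and> {i} \<union> ({1..n} - {i}) = {1..n}"
    using i by auto
  then obtain e where "e \<in> E" "e \<inter> {i} \<noteq> {}" "e \<inter> ({1..n} - {i}) \<noteq> {}"
    using c unfolding hg_connected_def by (elim allE[of _ "{i}"] allE[of _ "{1..n} - {i}"] impE) auto
  then show ?thesis unfolding leaves_isolated_def by blast
qed

abbreviation isolated_at :: "nat \<Rightarrow> nat \<Rightarrow> (nat \<Rightarrow> nat set) \<Rightarrow> bool" where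
  "isolated_at m i V \<equiv> (\<forall>k\<in>{1..m}. leaves_isolated i (V k))"

lemma prob_isolated:
  assumes d: "\<And>k. k \<in> {1..m} \<Longrightarrow> is_distr n (F k)" and i: "i \<in> {1..n}"
  shows "(\<Sum>V\<in>configs n m. config_prob n m F V * of_bool (isolated_at m i V))
         = (\<Prod>k\<in>{1..m}. 1 - touch_prob n (F k))"
proof -
  have "(\<Sum>V\<in>configs n m. config_prob n m F V * of_bool (isolated_at m i V))
      = (\<Prod>k\<in>{1..m}. \<Sum>A\<in>{A\<in>Pow {1..n}. leaves_isolated i A}. edge_prob n (F k) A)"
    by (rule sum_config_prob_edgewise)
  also have "\<dots> = (\<Prod>k\<in>{1..m}. 1 - touch_prob n (F k))"
    by (intro prod.cong refl sum_edge_prob_leaves_isolated d i)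
  finally show ?thesis .
qed

lemma prob_isolated_pair:
  assumes d: "\<And>k. k \<in> {1..m} \<Longrightarrow> is_distr n (F k)"
    and i: "i \<in> {1..n}" and j: "j \<in> {1..n}" and ij: "i \<noteq> j"
  shows "(\<Sum>V\<in>configs n m. config_prob n m F V * of_bool (isolated_at m i V \<and> isolated_at m j V))
         = (\<Prod>k\<in>{1..m}. 1 - 2 * touch_prob n (F k) + touch_pair_prob n (F k))"
proof -
  have "(\<Sum>V\<in>configs n m. config_prob n m F V * of_bool (isolated_at m i V \<and> isolated_at m j V))
      = (\<Sum>V\<in>configs n m. config_prob n m F V
           * of_bool (\<forall>k\<in>{1..m}. leaves_isolated i (V k) \<and> leaves_isolated j (V k)))"
    by (simp only: ball_conj_distrib)
  also have "\<dots> = (\<Prod>k\<in>{1..m}. \<Sum>A\<in>{A\<in>Pow {1..n}. leaves_isolated i A \<and> leaves_isolated j A}.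
                     edge_prob n (F k) A)"
    by (rule sum_config_prob_edgewise)
  also have "\<dots> = (\<Prod>k\<in>{1..m}. 1 - 2 * touch_prob n (F k) + touch_pair_prob n (F k))"
    by (intro prod.cong refl sum_edge_prob_leaves_isolated_pair d i j ij)
  finally show ?thesis .
qed

definition isolated_count :: "nat \<Rightarrow> nat \<Rightarrow> (nat \<Rightarrow> nat set) \<Rightarrow> real" where
  "isolated_count n m V = (\<Sum>i\<in>{1..n}. of_bool (isolated_at m i V))"

lemma expected_isolated_count:
  assumes d: "\<And>k. k \<in> {1..m} \<Longrightarrow> is_distr n (F k)"
  shows "(\<Sum>V\<in>configs n m. config_prob n m F V * isolated_count n m V)
         = real n * (\<Prod>k\<in>{1..m}. 1 - touch_prob n (F k))"
proof -
  have "(\<Sum>V\<in>configs n m. config_prob n m F V * isolated_count n m V)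
      = (\<Sum>i\<in>{1..n}. \<Sum>V\<in>configs n m. config_prob n m F V * of_bool (isolated_at m i V))"
    unfolding isolated_count_def sum_distrib_left by (rule sum.swap)
  then show ?thesis using prob_isolated[OF d] by simp
qed

lemma expected_isolated_count_sq:
  assumes d: "\<And>k. k \<in> {1..m} \<Longrightarrow> is_distr n (F k)"
  defines "U \<equiv> \<Prod>k\<in>{1..m}. 1 - touch_prob n (F k)"
    and "W \<equiv> \<Prod>k\<in>{1..m}. 1 - 2 * touch_prob n (F k) + touch_pair_prob n (F k)"
  shows "(\<Sum>V\<in>configs n m. config_prob n m F V * (isolated_count n m V)\<^sup>2)
         = real n * U + real n * (real n - 1) * W"
proof -
  define pair where "pair i j = (\<Sum>V\<in>configs n m.
      config_prob n m F V * of_bool (isolated_at m i V \<and> isolated_at m j V))" for i j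
  have pair: "pair i j = (if i = j then U else W)" if "i \<in> {1..n}" "j \<in> {1..n}" for i j
    using that prob_isolated[OF d] prob_isolated_pair[OF d] unfolding pair_def U_def W_def by auto
  have sq: "(isolated_count n m V)\<^sup>2
      = (\<Sum>i\<in>{1..n}. \<Sum>j\<in>{1..n}. of_bool (isolated_at m i V \<and> isolated_at m j V))" for V
    unfolding isolated_count_def power2_eq_square sum_product of_bool_conj ..
  have "(\<Sum>V\<in>configs n m. config_prob n m F V * (isolated_count n m V)\<^sup>2)
      = (\<Sum>V\<in>configs n m. \<Sum>i\<in>{1..n}. \<Sum>j\<in>{1..n}.
           config_prob n m F V * of_bool (isolated_at m i V \<and> isolated_at m j V))"
    unfolding sq sum_distrib_left ..
  also have "\<dots> = (\<Sum>i\<in>{1..n}. \<Sum>j\<in>{1..n}. pair i j)"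
    unfolding pair_def sum_distrib_left by (subst sum.swap) (intro sum.cong refl sum.swap)
  also have "\<dots> = (\<Sum>i\<in>{1..n}. U + (real n - 1) * W)"
  proof (rule sum.cong[OF refl])
    fix i assume i: "i \<in> {1..n}"
    have "(\<Sum>j\<in>{1..n}. pair i j) = pair i i + (\<Sum>j\<in>{1..n} - {i}. pair i j)"
      using i by (simp add: sum.remove)
    also have "\<dots> = U + (\<Sum>j\<in>{1..n} - {i}. W)" using i pair by simp
    finally show "(\<Sum>j\<in>{1..n}. pair i j) = U + (real n - 1) * W" using i by (simp add: of_nat_diff)
  qed
  finally show ?thesis by (simp add: algebra_simps)
qed

lemma conn_prob_le_isolated_moments:
  assumes d: "\<And>k. k \<in> {1..m} \<Longrightarrow> is_distr n (F k)" and n: "2 \<le> n"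
  defines "U \<equiv> \<Prod>k\<in>{1..m}. 1 - touch_prob n (F k)"
    and "W \<equiv> \<Prod>k\<in>{1..m}. 1 - 2 * touch_prob n (F k) + touch_pair_prob n (F k)"
  assumes U: "0 < U"
  shows "conn_prob n m F \<le> 1 / (real n * U) + W / U\<^sup>2 - 1"
proof -
  have "0 \<le> (\<Sum>V\<in>configs n m. config_prob n m F V * of_bool (isolated_at m 1 V \<and> isolated_at m 2 V))"
    using config_prob_nonneg[OF d] by (intro sum_nonneg) simp
  then have W0: "0 \<le> W" using prob_isolated_pair[OF d, where i = 1 and j = 2] n unfolding W_def by simp
  have E: "(\<Sum>V\<in>configs n m. config_prob n m F V * isolated_count n m V) = real n * U"
    using expected_isolated_count[OF d] unfolding U_def .
  have E2: "(\<Sum>V\<in>configs n m. config_prob n m F V * (isolated_count n m V)\<^sup>2)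
      = real n * U + real n * (real n - 1) * W"
    using expected_isolated_count_sq[OF d] unfolding U_def W_def .
  have "conn_prob n m F
      \<le> (\<Sum>V\<in>configs n m. config_prob n m F V * (isolated_count n m V)\<^sup>2)
         / (\<Sum>V\<in>configs n m. config_prob n m F V * isolated_count n m V)\<^sup>2 - 1"
    unfolding conn_prob_eq_sum_configs
  proof (rule second_moment_method[OF config_prob_nonneg[OF d] sum_config_prob[OF d]])
    show "0 < (\<Sum>V\<in>configs n m. config_prob n m F V * isolated_count n m V)"
      using E U n by simp
    fix V assume "V \<in> configs n m" "hg_connected {1..n} (V ` {1..m})"
    then have "\<not> isolated_at m i V" if "i \<in> {1..n}" for i
      using connected_imp_not_isolated[OF _ n that] by blast
    then show "isolated_count n m V = 0" unfolding isolated_count_def by (intro sum.neutral) simp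
  qed
  also have "\<dots> = 1 / (real n * U) + (real n - 1) / real n * (W / U\<^sup>2) - 1"
    unfolding E E2 using U n by (simp add: field_simps power2_eq_square)
  also have "\<dots> \<le> 1 / (real n * U) + W / U\<^sup>2 - 1"
  proof -
    have "(real n - 1) / real n * (W / U\<^sup>2) \<le> W / U\<^sup>2"
      using W0 n by (intro mult_left_le_one_le) auto
    then show ?thesis by linarith
  qed
  finally show ?thesis .
qed

lemma conn_prob_le_exp:
  assumes d: "\<And>k. k \<in> {1..m} \<Longrightarrow> is_distr n (F k)" and n: "2 \<le> n"
  defines "\<mu> \<equiv> moment_sum 1 n m F / real n"
    and "Q \<equiv> moment_sum 2 n m F / (real n)\<^sup>2"
    and "D \<equiv> moment_sum 2 n m F / (real n * (real n - 1))"
  assumes Q: "Q \<le> 1/4"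
  shows "conn_prob n m F \<le> exp (\<mu> - ln (real n) + 2 * Q) + exp (D + 4 * Q) - 1"
proof -
  define a where "a k = touch_prob n (F k)" for k
  define U where "U = (\<Prod>k\<in>{1..m}. 1 - a k)"
  define W where "W = (\<Prod>k\<in>{1..m}. 1 - 2 * a k + touch_pair_prob n (F k))"
  have np: "real n > 0" using n by auto
  have a_sum: "(\<Sum>k\<in>{1..m}. a k) = \<mu>" using sum_touch_prob[where F = F and n = n and m = m] by (simp add: a_def \<mu>_def)
  have a_sq: "(\<Sum>k\<in>{1..m}. (a k)\<^sup>2) \<le> Q" unfolding a_def Q_def by (rule sum_touch_prob_sq_le[OF d])
  have b_sum: "(\<Sum>k\<in>{1..m}. touch_pair_prob n (F k)) \<le> D"
    unfolding D_def by (rule sum_touch_pair_prob_le[OF d n])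
  have a_bounds: "0 \<le> a k \<and> a k \<le> 1/2" if k: "k \<in> {1..m}" for k
  proof
    show "0 \<le> a k" unfolding a_def using touch_prob_nonneg[OF d[OF k]] .
    have "(a k)\<^sup>2 \<le> (\<Sum>k\<in>{1..m}. (a k)\<^sup>2)" using k by (intro member_le_sum) auto
    then have "(a k)\<^sup>2 \<le> (1/2)\<^sup>2" using a_sq Q by (simp add: power2_eq_square)
    then show "a k \<le> 1/2" by (rule power2_le_imp_le) simp
  qed
  have "exp (- \<mu> - 2 * Q) \<le> exp (- (\<Sum>k\<in>{1..m}. a k) - 2 * (\<Sum>k\<in>{1..m}. (a k)\<^sup>2))"
    using a_sum a_sq by simp
  also have "\<dots> \<le> U" unfolding U_def by (intro exp_le_prod_one_minus a_bounds) auto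
  finally have U_ge: "exp (- \<mu> - 2 * Q) \<le> U" .
  have W_factor: "0 \<le> 1 - 2 * a k + touch_pair_prob n (F k)" if k: "k \<in> {1..m}" for k
  proof -
    have "0 \<le> (\<Sum>A\<in>{A\<in>Pow {1..n}. leaves_isolated 1 A \<and> leaves_isolated 2 A}. edge_prob n (F k) A)"
      using edge_prob_nonneg[OF d[OF k]] by (simp add: sum_nonneg)
    then show ?thesis unfolding a_def using sum_edge_prob_leaves_isolated_pair[OF d[OF k], of 1 2] n by simp
  qed
  have "W \<le> exp (\<Sum>k\<in>{1..m}. (1 - 2 * a k + touch_pair_prob n (F k)) - 1)"
    unfolding W_def by (intro prod_le_exp_sum W_factor) auto
  also have "\<dots> = exp (- 2 * (\<Sum>k\<in>{1..m}. a k) + (\<Sum>k\<in>{1..m}. touch_pair_prob n (F k)))"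
    by (simp add: sum.distrib sum_subtractf sum_distrib_left sum_negf)
  also have "\<dots> \<le> exp (- 2 * \<mu> + D)" using a_sum b_sum by simp
  finally have W_le: "W \<le> exp (- 2 * \<mu> + D)" .
  have U_pos: "0 < U" using U_ge exp_gt_zero[of "- \<mu> - 2 * Q"] by linarith
  have "conn_prob n m F \<le> 1 / (real n * U) + W / U\<^sup>2 - 1"
    using conn_prob_le_isolated_moments[OF d n] U_pos unfolding U_def W_def a_def by simp
  also have "1 / (real n * U) \<le> 1 / (real n * exp (- \<mu> - 2 * Q))"
    using U_ge U_pos np by (intro divide_left_mono mult_left_mono mult_pos_pos) auto
  also have "\<dots> = exp (\<mu> - ln (real n) + 2 * Q)"
    using np by (simp add: exp_diff exp_add exp_minus field_simps)
  also have "W / U\<^sup>2 \<le> exp (- 2 * \<mu> + D) / (exp (- \<mu> - 2 * Q))\<^sup>2"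
    using W_le U_ge W_factor U_pos unfolding W_def by (intro frac_le power_mono prod_nonneg) auto
  also have "\<dots> = exp (D + 4 * Q)"
    by (simp add: power2_eq_square exp_add[symmetric] exp_diff[symmetric] field_simps)
  finally show ?thesis by simp
qed

section \<open>Cuts\<close>

lemma respects_cut_Diff: "e \<subseteq> U \<Longrightarrow> respects_cut (U - S) e \<longleftrightarrow> respects_cut S e"
  unfolding respects_cut_def by auto

lemma not_connected_imp_small_cut:
  assumes fin: "finite U" and E: "\<And>e. e \<in> E \<Longrightarrow> e \<subseteq> U" and nc: "\<not> hg_connected U E"
  shows "\<exists>S\<subseteq>U. 1 \<le> card S \<and> 2 * card S \<le> card U \<and> (\<forall>e\<in>E. respects_cut S e)"
proof -
  have "\<exists>V1 V2. V1 \<noteq> {} \<and> V2 \<noteq> {} \<and> V1 \<inter> V2 = {} \<and> V1 \<union> V2 = U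
      \<and> (\<forall>e\<in>E. e \<inter> V1 = {} \<or> e \<inter> V2 = {})"
    using nc unfolding hg_connected_def by simp
  then obtain V1 V2 where V: "V1 \<noteq> {}" "V2 \<noteq> {}" "V1 \<inter> V2 = {}" "V1 \<union> V2 = U"
    and no: "\<forall>e\<in>E. e \<inter> V1 = {} \<or> e \<inter> V2 = {}"
    by blast
  have V2: "V2 = U - V1" using V by auto
  have cut: "\<forall>e\<in>E. respects_cut V1 e"
    unfolding respects_cut_def
  proof
    fix e assume "e \<in> E"
    then show "e \<inter> V1 = {} \<or> e \<subseteq> V1" using no E[of e] V2 by auto
  qed
  have sub: "V1 \<subseteq> U" "U - V1 \<subseteq> U" using V by auto
  have fin1: "finite V1" "finite (U - V1)" using fin sub finite_subset by auto
  have card: "card V1 + card (U - V1) = card U"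
    using fin sub(1) by (simp add: card_Diff_subset card_mono fin1)
  have ne: "1 \<le> card V1" "1 \<le> card (U - V1)"
    using V(1,2) V2 fin1 by (auto simp: Suc_le_eq card_gt_0_iff)
  show ?thesis
  proof (cases "2 * card V1 \<le> card U")
    case True
    with sub(1) ne(1) cut show ?thesis by (intro exI[of _ V1]) simp
  next
    case False
    then have "2 * card (U - V1) \<le> card U" using card by linarith
    moreover have "\<forall>e\<in>E. respects_cut (U - V1) e" using cut E respects_cut_Diff by simp
    ultimately show ?thesis using sub(2) ne(2) by (intro exI[of _ "U - V1"]) simp
  qed
qed

lemma prob_respects_cut_le_exp:
  assumes d: "\<And>k. k \<in> {1..m} \<Longrightarrow> is_distr n (F k)"
    and S: "S \<subseteq> {1..n}" "1 \<le> card S" "2 * card S \<le> n"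
  defines "t \<equiv> real (card S) / real n"
  shows "(\<Prod>k\<in>{1..m}. \<Sum>A\<in>{A\<in>Pow {1..n}. respects_cut S A}. edge_prob n (F k) A)
         \<le> exp (- max (t * moment_sum 1 n m F - t\<^sup>2 * moment_sum 2 n m F) (t * moment_sum 0 n m F))"
proof -
  define q where "q k = (\<Sum>A\<in>{A\<in>Pow {1..n}. respects_cut S A}. edge_prob n (F k) A)" for k
  define r where "r x = 1 - (real (card S choose x) + real (n - card S choose x)) / real (n choose x)"
    for x
  have n: "1 \<le> n" using S by linarith
  have q: "1 - q k = (\<Sum>x=2..n. F k x * r x)" if "k \<in> {1..m}" for k
    unfolding q_def r_def using one_minus_sum_edge_prob_respects_cut[OF d[OF that] S(1) n] .
  have "t * moment_sum 1 n m F - t\<^sup>2 * moment_sum 2 n m F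
      = (\<Sum>k\<in>{1..m}. \<Sum>x=2..n. F k x * (real x * t - (real x)\<^sup>2 * t\<^sup>2))"
    unfolding moment_sum_def by (simp add: sum_distrib_left sum_subtractf algebra_simps)
  also have "\<dots> \<le> (\<Sum>k\<in>{1..m}. \<Sum>x=2..n. F k x * r x)"
    unfolding r_def using crossing_ratio_bounds(1)[of _ n "card S"] S is_distr_nonneg[OF d]
    by (intro sum_mono mult_left_mono) (auto simp: t_def)
  also have "\<dots> = (\<Sum>k\<in>{1..m}. 1 - q k)" using q by simp
  finally have lb1: "t * moment_sum 1 n m F - t\<^sup>2 * moment_sum 2 n m F \<le> (\<Sum>k\<in>{1..m}. 1 - q k)" .
  have "t * moment_sum 0 n m F = (\<Sum>k\<in>{1..m}. \<Sum>x=2..n. F k x * t)"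
    unfolding moment_sum_def by (simp add: sum_distrib_left algebra_simps)
  also have "\<dots> \<le> (\<Sum>k\<in>{1..m}. \<Sum>x=2..n. F k x * r x)"
    unfolding r_def using crossing_ratio_bounds(2)[of _ n "card S"] S is_distr_nonneg[OF d]
    by (intro sum_mono mult_left_mono) (auto simp: t_def)
  also have "\<dots> = (\<Sum>k\<in>{1..m}. 1 - q k)" using q by simp
  finally have lb2: "t * moment_sum 0 n m F \<le> (\<Sum>k\<in>{1..m}. 1 - q k)" .
  have "(\<Prod>k\<in>{1..m}. q k) \<le> exp (\<Sum>k\<in>{1..m}. q k - 1)"
    unfolding q_def using edge_prob_nonneg[OF d] by (intro prod_le_exp_sum sum_nonneg) auto
  also have "\<dots> = exp (- (\<Sum>k\<in>{1..m}. 1 - q k))" by (simp add: sum_negf[symmetric])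
  also have "\<dots> \<le> exp (- max (t * moment_sum 1 n m F - t\<^sup>2 * moment_sum 2 n m F) (t * moment_sum 0 n m F))"
    using lb1 lb2 by simp
  finally show ?thesis unfolding q_def .
qed

lemma one_minus_conn_prob_le_cuts:
  assumes d: "\<And>k. k \<in> {1..m} \<Longrightarrow> is_distr n (F k)"
  shows "1 - conn_prob n m F \<le> (\<Sum>s=1..n div 2. real (n choose s) *
     exp (- max (real s / real n * moment_sum 1 n m F - (real s / real n)\<^sup>2 * moment_sum 2 n m F)
                (real s / real n * moment_sum 0 n m F)))"
    (is "_ \<le> (\<Sum>s=1..n div 2. real (n choose s) * ?B s)")
proof -
  define w where "w = config_prob n m F"
  define cuts where "cuts = {S\<in>Pow {1..n}. 1 \<le> card S \<and> 2 * card S \<le> n}"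
  define respected where "respected S V \<longleftrightarrow> (\<forall>k\<in>{1..m}. respects_cut S (V k))" for S V
  have "1 - conn_prob n m F
      = (\<Sum>V\<in>configs n m. w V * of_bool (\<not> hg_connected {1..n} (V ` {1..m})))"
    using sum_config_prob[OF d] unfolding conn_prob_eq_sum_configs w_def
    by (simp add: of_bool_not_iff right_diff_distrib sum_subtractf)
  also have "\<dots> \<le> (\<Sum>V\<in>configs n m. w V * (\<Sum>S\<in>cuts. of_bool (respected S V)))"
  proof (intro sum_mono mult_left_mono)
    fix V assume V: "V \<in> configs n m"
    show "0 \<le> w V" unfolding w_def using config_prob_nonneg[OF d] .
    show "of_bool (\<not> hg_connected {1..n} (V ` {1..m})) \<le> (\<Sum>S\<in>cuts. of_bool (respected S V) :: real)"
    proof (cases "hg_connected {1..n} (V ` {1..m})")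
      case False
      moreover have "\<And>e. e \<in> V ` {1..m} \<Longrightarrow> e \<subseteq> {1..n}" using V unfolding configs_def by auto
      ultimately obtain S where "S \<in> cuts" "respected S V"
        using not_connected_imp_small_cut[of "{1..n}" "V ` {1..m}"]
        unfolding cuts_def respected_def by auto
      moreover have "finite cuts" unfolding cuts_def by simp
      ultimately have "of_bool (respected S V) \<le> (\<Sum>S\<in>cuts. of_bool (respected S V) :: real)"
        by (intro member_le_sum) auto
      then show ?thesis using False \<open>respected S V\<close> by simp
    qed (simp add: sum_nonneg)
  qed
  also have "\<dots> = (\<Sum>S\<in>cuts. \<Prod>k\<in>{1..m}. \<Sum>A\<in>{A\<in>Pow {1..n}. respects_cut S A}. edge_prob n (F k) A)"
    unfolding sum_distrib_left respected_def w_def sum_config_prob_edgewise[symmetric]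
    by (rule sum.swap)
  also have "\<dots> \<le> (\<Sum>S\<in>cuts. ?B (card S))"
    unfolding cuts_def by (intro sum_mono prob_respects_cut_le_exp d) auto
  also have "\<dots> = (\<Sum>S\<in>Pow {1..n}. if 1 \<le> card S \<and> 2 * card S \<le> n then ?B (card S) else 0)"
    unfolding cuts_def by (rule sum.inter_filter) simp
  also have "\<dots> = (\<Sum>s\<le>n. real (n choose s) * (if 1 \<le> s \<and> 2 * s \<le> n then ?B s else 0))"
    using sum_Pow_card[of "{1..n}" "\<lambda>s. if 1 \<le> s \<and> 2 * s \<le> n then ?B s else 0"] by simp
  also have "\<dots> = (\<Sum>s=1..n div 2. real (n choose s) * ?B s)"
    by (rule sum.mono_neutral_cong_right) auto
  finally show ?thesis .
qed

lemma small_cut_log_bound: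
  assumes s: "1 \<le> s" and C: "0 \<le> C" and cut: "2 * C * real s \<le> real n"
    and sq: "C * ln (real n) \<le> 2 * sqrt (real n)"
  shows "C * real s / (2 * real n) * ln (real n) - ln (real s) \<le> 1"
proof (cases "s * s \<le> n")
  case True
  have "1 \<le> s * s" using s by simp
  then have "1 \<le> n" using True by linarith
  then have np: "0 < real n" "0 \<le> ln (real n)" by auto
  have "real s \<le> sqrt (real n)"
    using True by (intro real_le_rsqrt) (simp add: power2_eq_square flip: of_nat_mult)
  then have "C * real s / (2 * real n) * ln (real n) \<le> C * sqrt (real n) / (2 * real n) * ln (real n)"
    using C np by (intro mult_right_mono divide_right_mono mult_left_mono) auto
  also have "\<dots> = C * ln (real n) / (2 * sqrt (real n))"
    using np by (simp add: field_simps)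
  also have "\<dots> \<le> 1" using sq np by (simp add: field_simps)
  finally have "C * real s / (2 * real n) * ln (real n) \<le> 1" .
  moreover have "0 \<le> ln (real s)" using s by simp
  ultimately show ?thesis by linarith
next
  case False
  then have "real n < real s * real s" by (metis of_nat_less_iff of_nat_mult not_le)
  have "ln (real n) \<le> 2 * ln (real s)"
  proof (cases "n = 0")
    case False
    then have "ln (real n) < ln (real s * real s)" using \<open>real n < real s * real s\<close> by simp
    then show ?thesis using s by (simp add: ln_mult)
  qed (use s in simp)
  moreover have "C * real s / (2 * real n) \<le> 1/4" using cut by (cases "n = 0") (simp_all add: field_simps)
  moreover have "0 \<le> ln (real n)" by (cases "n = 0") auto
  moreover have "0 \<le> C * real s / (2 * real n)" using C by simp
  ultimately have "C * real s / (2 * real n) * ln (real n) \<le> ln (real n) / 4"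
    using mult_right_mono by fastforce
  then show ?thesis using \<open>ln (real n) \<le> 2 * ln (real s)\<close> \<open>0 \<le> ln (real n)\<close> by linarith
qed

lemma small_cut_term_le:
  fixes C S0 S1 S2 :: real
  assumes s: "1 \<le> s" and cut: "2 * C * real s \<le> real n" and C: "1 \<le> C"
    and S01: "2 * S0 \<le> S1" and S20: "S2 \<le> C * S0"
    and above: "ln (real n) \<le> S1 / real n" and sq: "C * ln (real n) \<le> 2 * sqrt (real n)"
  defines "t \<equiv> real s / real n"
  shows "real (n choose s) * exp (- (t * S1 - t\<^sup>2 * S2))
         \<le> exp (real s * (2 - 3 * (S1 / real n - ln (real n)) / 4))"
proof -
  define \<mu> where "\<mu> = S1 / real n"
  define \<omega> where "\<omega> = \<mu> - ln (real n)"
  define \<epsilon> where "\<epsilon> = C * real s / (2 * real n)"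
  have "real s \<le> 2 * C * real s" using mult_right_mono[of 1 "2 * C" "real s"] C by simp
  then have "real s \<le> real n" using cut by linarith
  then have n: "1 \<le> s" "s \<le> n" "0 < real n" using s by auto
  have \<omega>: "0 \<le> \<omega>" using above unfolding \<omega>_def \<mu>_def by simp
  have \<epsilon>: "\<epsilon> \<le> 1/4" using cut n unfolding \<epsilon>_def by (simp add: field_simps)
  have tS1: "t * S1 = real s * \<mu>" using n unfolding t_def \<mu>_def by simp
  have "C * S0 \<le> C * (S1 / 2)" using S01 C by (intro mult_left_mono) auto
  then have "S2 \<le> C * (S1 / 2)" using S20 by linarith
  then have "t\<^sup>2 * S2 \<le> t\<^sup>2 * (C * (S1 / 2))" by (intro mult_left_mono) auto
  also have "\<dots> = \<epsilon> * (real s * \<mu>)"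
    using n unfolding \<epsilon>_def t_def \<mu>_def by (simp add: power2_eq_square field_simps)
  finally have exponent: "real s * \<mu> * (1 - \<epsilon>) \<le> t * S1 - t\<^sup>2 * S2" using tS1 by (simp add: algebra_simps)
  have "1 + ln (real n) - ln (real s) - \<mu> * (1 - \<epsilon>) = 1 - ln (real s) + \<epsilon> * ln (real n) - \<omega> * (1 - \<epsilon>)"
    unfolding \<omega>_def by (simp add: algebra_simps)
  also have "\<dots> = (\<epsilon> * ln (real n) - ln (real s)) + 1 - \<omega> + \<omega> * \<epsilon>"
    by (simp add: algebra_simps)
  also have "\<dots> \<le> 2 - 3 * \<omega> / 4"
  proof -
    have "\<epsilon> * ln (real n) - ln (real s) \<le> 1"
      using small_cut_log_bound[OF s _ cut sq] C unfolding \<epsilon>_def by simp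
    moreover have "\<omega> * \<epsilon> \<le> \<omega> * (1/4)" using \<epsilon> \<omega> by (intro mult_left_mono)
    ultimately show ?thesis by linarith
  qed
  finally have rate: "1 + ln (real n) - ln (real s) - \<mu> * (1 - \<epsilon>) \<le> 2 - 3 * \<omega> / 4" .
  have "real (n choose s) * exp (- (t * S1 - t\<^sup>2 * S2))
      \<le> exp (real s * (1 + ln (real n) - ln (real s))) * exp (- (real s * \<mu> * (1 - \<epsilon>)))"
    using binomial_le_exp[OF n(1,2)] exponent by (intro mult_mono) auto
  also have "\<dots> = exp (real s * (1 + ln (real n) - ln (real s) - \<mu> * (1 - \<epsilon>)))"
    by (simp add: exp_add[symmetric] algebra_simps)
  also have "\<dots> \<le> exp (real s * (2 - 3 * \<omega> / 4))"
    using rate n by (simp add: mult_left_mono)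
  finally show ?thesis unfolding \<omega>_def \<mu>_def .
qed

lemma large_cut_term_le:
  fixes C S0 S1 S2 :: real
  assumes s: "1 \<le> s" "s \<le> n" and cut: "real n < 2 * C * real s" and C: "1 \<le> C"
    and S1: "0 \<le> S1" and S12: "2 * S1 \<le> S2" and S20: "S2 \<le> C * S0"
  defines "t \<equiv> real s / real n"
  shows "real (n choose s) * exp (- (t * S0)) \<le> 2 ^ n * exp (- S1 / C\<^sup>2)"
proof -
  have n: "0 < real n" using s by simp
  have "S1 * real n \<le> S1 * (2 * C * real s)" using cut S1 by (intro mult_left_mono) auto
  then have "S1 / C\<^sup>2 \<le> 2 * real s * S1 / (real n * C)"
    using C n by (simp add: field_simps power2_eq_square)
  also have "\<dots> = t * (2 * S1 / C)" unfolding t_def using C n by (simp add: field_simps)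
  also have "\<dots> \<le> t * S0"
    using S12 S20 C unfolding t_def by (intro mult_left_mono) (auto simp: field_simps)
  finally have "exp (- (t * S0)) \<le> exp (- S1 / C\<^sup>2)" by simp
  moreover have "real (n choose s) \<le> 2 ^ n"
    using binomial_le_pow2[of n s] by (simp flip: of_nat_power)
  ultimately show ?thesis by (intro mult_mono) auto
qed

lemma one_minus_conn_prob_le:
  assumes d: "\<And>k. k \<in> {1..m} \<Longrightarrow> is_distr n (F k)" and C: "1 \<le> C"
    and S20: "moment_sum 2 n m F \<le> C * moment_sum 0 n m F"
    and above: "ln (real n) \<le> moment_sum 1 n m F / real n"
    and sq: "C * ln (real n) \<le> 2 * sqrt (real n)"
  defines "\<omega> \<equiv> moment_sum 1 n m F / real n - ln (real n)"
  shows "1 - conn_prob n m F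
         \<le> (\<Sum>s=1..n div 2. exp (real s * (2 - 3 * \<omega> / 4)))
            + real n * (2 ^ n * exp (- moment_sum 1 n m F / C\<^sup>2))"
proof -
  let ?S = "\<lambda>r. moment_sum r n m F"
  have S: "0 \<le> ?S 0" "2 * ?S 0 \<le> ?S 1" "2 * ?S 1 \<le> ?S 2"
    using moment_sum_nonneg[OF d] moment_sum_Suc_ge[OF d] by (auto simp: numeral_2_eq_2)
  have cut_term: "real (n choose s) * exp (- max (real s / real n * ?S 1 - (real s / real n)\<^sup>2 * ?S 2)
                                                 (real s / real n * ?S 0))
      \<le> exp (real s * (2 - 3 * \<omega> / 4)) + 2 ^ n * exp (- ?S 1 / C\<^sup>2)"
    (is "?c * exp (- max ?A ?B) \<le> ?small + ?large") if "s \<in> {1..n div 2}" for s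
  proof (cases "2 * C * real s \<le> real n")
    case True
    have s: "1 \<le> s" using that by simp
    have "?c * exp (- max ?A ?B) \<le> ?c * exp (- ?A)" by (intro mult_left_mono) auto
    also have "\<dots> \<le> ?small"
      using small_cut_term_le[of s C n "?S 0" "?S 1" "?S 2"] s True C S S20 above sq
      unfolding \<omega>_def by simp
    finally show ?thesis by (simp add: add_increasing2)
  next
    case False
    have s: "1 \<le> s" "s \<le> n" using that by (auto intro: order_trans[OF _ div_le_dividend])
    have "?c * exp (- max ?A ?B) \<le> ?c * exp (- ?B)" by (intro mult_left_mono) auto
    also have "\<dots> \<le> ?large"
      using large_cut_term_le[of s n C "?S 1" "?S 2" "?S 0"] s False C S S20 by simp
    finally show ?thesis by (simp add: add_increasing)
  qed
  have "1 - conn_prob n m F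
      \<le> (\<Sum>s=1..n div 2. exp (real s * (2 - 3 * \<omega> / 4)) + 2 ^ n * exp (- ?S 1 / C\<^sup>2))"
    using one_minus_conn_prob_le_cuts[OF d] sum_mono[OF cut_term] by (rule order_trans)
  also have "\<dots> \<le> (\<Sum>s=1..n div 2. exp (real s * (2 - 3 * \<omega> / 4))) + real n * (2 ^ n * exp (- ?S 1 / C\<^sup>2))"
    by (simp add: sum.distrib mult_right_mono)
  finally show ?thesis .
qed

section \<open>Asymptotics\<close>

lemma moment_sum_2_div_sq_tendsto_zero:
  fixes m :: "nat \<Rightarrow> nat" and f :: "nat \<Rightarrow> nat \<Rightarrow> nat \<Rightarrow> real"
  assumes d: "\<And>n k. k \<in> {1..m n} \<Longrightarrow> is_distr n (f n k)" and C: "0 \<le> C"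
    and S20: "eventually (\<lambda>n. moment_sum 2 n (m n) (f n) \<le> C * moment_sum 0 n (m n) (f n)) sequentially"
    and lim: "filterlim (\<lambda>n. moment_sum 1 n (m n) (f n) / real n - ln (real n)) at_bot sequentially"
  shows "(\<lambda>n. moment_sum 2 n (m n) (f n) / (real n)\<^sup>2) \<longlonglongrightarrow> 0"
proof -
  define S where "S r n = moment_sum r n (m n) (f n)" for r n
  have S: "0 \<le> S r n" "2 * S 0 n \<le> S 1 n" for r n
    unfolding S_def using moment_sum_nonneg[where F = "f n", OF d]
      moment_sum_Suc_ge[where F = "f n" and r = 0, OF d] by auto
  have below: "eventually (\<lambda>n. S 1 n / real n - ln (real n) \<le> 0) sequentially"
    using lim unfolding filterlim_at_bot S_def by (rule spec)
  have upper: "eventually (\<lambda>n. S 2 n / (real n)\<^sup>2 \<le> C / 2 * (ln (real n) / real n)) sequentially"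
    using below S20 eventually_gt_at_top[of "0::nat"]
  proof eventually_elim
    case (elim n)
    have "C * S 0 n \<le> C * (S 1 n / 2)" using S(2)[of n] C by (intro mult_left_mono) auto
    then have "S 2 n \<le> C * (S 1 n / 2)" using elim(2) unfolding S_def by linarith
    also have "\<dots> \<le> C * (real n * ln (real n) / 2)"
      using elim(1,3) C by (intro mult_left_mono) (auto simp: field_simps)
    finally show ?case using elim(3) by (simp add: field_simps power2_eq_square)
  qed
  have lower: "eventually (\<lambda>n. 0 \<le> S 2 n / (real n)\<^sup>2) sequentially" using S by simp
  from tendsto_sandwich[OF lower upper tendsto_const tendsto_mult_right_zero[OF lim_ln_over_n]]
  show ?thesis unfolding S_def .
qed

lemma conn_prob_tendsto_zero:
  fixes m :: "nat \<Rightarrow> nat" and f :: "nat \<Rightarrow> nat \<Rightarrow> nat \<Rightarrow> real"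
  assumes d: "\<And>n k. k \<in> {1..m n} \<Longrightarrow> is_distr n (f n k)" and C: "0 \<le> C"
    and S20: "eventually (\<lambda>n. moment_sum 2 n (m n) (f n) \<le> C * moment_sum 0 n (m n) (f n)) sequentially"
    and lim: "filterlim (\<lambda>n. moment_sum 1 n (m n) (f n) / real n - ln (real n)) at_bot sequentially"
  shows "(\<lambda>n. conn_prob n (m n) (f n)) \<longlonglongrightarrow> 0"
proof -
  define S where "S r n = moment_sum r n (m n) (f n)" for r n
  define Q where "Q n = S 2 n / (real n)\<^sup>2" for n
  define D where "D n = S 2 n / (real n * (real n - 1))" for n
  have S: "0 \<le> S r n" for r n unfolding S_def using moment_sum_nonneg[where F = "f n", OF d] .
  have Q: "Q \<longlonglongrightarrow> 0"
    unfolding Q_def S_def by (rule moment_sum_2_div_sq_tendsto_zero[OF d C S20 lim])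
  have "eventually (\<lambda>n. D n \<le> 2 * Q n) sequentially"
    using eventually_ge_at_top[of "2::nat"]
  proof eventually_elim
    case (elim n)
    have "real n \<le> 2 * (real n - 1)" using elim by simp
    then have "S 2 n / (real n * (real n - 1)) \<le> S 2 n / (real n * (real n / 2))"
      using elim S by (intro divide_left_mono mult_left_mono mult_pos_pos) auto
    then show ?case unfolding D_def Q_def by (simp add: power2_eq_square field_simps)
  qed
  moreover have "eventually (\<lambda>n. 0 \<le> D n) sequentially"
    using eventually_ge_at_top[of "2::nat"] by eventually_elim (simp add: D_def S)
  ultimately have D: "D \<longlonglongrightarrow> 0"
    using tendsto_sandwich[OF _ _ tendsto_const tendsto_mult_right_zero[OF Q]] by blast
  have "eventually (\<lambda>n. Q n < 1/4) sequentially" using order_tendstoD(2)[OF Q, of "1/4"] by simp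
  with eventually_ge_at_top[of "2::nat"]
  have "eventually (\<lambda>n. 2 \<le> n \<and> Q n < 1/4) sequentially" by (rule eventually_conj)
  then have "eventually (\<lambda>n. conn_prob n (m n) (f n)
          \<le> exp (S 1 n / real n - ln (real n) + 2 * Q n) + exp (D n + 4 * Q n) - 1) sequentially"
  proof eventually_elim
    case (elim n)
    then show ?case unfolding S_def Q_def D_def by (intro conn_prob_le_exp d) auto
  qed
  moreover have "(\<lambda>n. exp (S 1 n / real n - ln (real n) + 2 * Q n) + exp (D n + 4 * Q n) - 1)
      \<longlonglongrightarrow> 0 + 1 - 1"
  proof (intro tendsto_intros)
    have "filterlim (\<lambda>n. 2 * Q n + (S 1 n / real n - ln (real n))) at_bot sequentially"
      using lim unfolding S_def
      by (subst filterlim_tendsto_add_at_bot_iff[OF tendsto_mult_right_zero[OF Q]])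
    then have "(\<lambda>n. exp (2 * Q n + (S 1 n / real n - ln (real n)))) \<longlonglongrightarrow> 0"
      by (rule filterlim_compose[OF exp_at_bot])
    then show "(\<lambda>n. exp (S 1 n / real n - ln (real n) + 2 * Q n)) \<longlonglongrightarrow> 0"
      by (subst add.commute)
    show "(\<lambda>n. exp (D n + 4 * Q n)) \<longlonglongrightarrow> 1"
      using tendsto_exp[OF tendsto_add[OF D tendsto_mult_right_zero[OF Q]]] by simp
  qed
  moreover have "eventually (\<lambda>n. 0 \<le> conn_prob n (m n) (f n)) sequentially"
    using conn_prob_bounds(1)[OF d] by simp
  ultimately show ?thesis using tendsto_sandwich[OF _ _ tendsto_const] by fastforce
qed

lemma conn_prob_tendsto_one:
  fixes m :: "nat \<Rightarrow> nat" and f :: "nat \<Rightarrow> nat \<Rightarrow> nat \<Rightarrow> real"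
  assumes d: "\<And>n k. k \<in> {1..m n} \<Longrightarrow> is_distr n (f n k)" and C: "1 \<le> C"
    and S20: "eventually (\<lambda>n. moment_sum 2 n (m n) (f n) \<le> C * moment_sum 0 n (m n) (f n)) sequentially"
    and lim: "filterlim (\<lambda>n. moment_sum 1 n (m n) (f n) / real n - ln (real n)) at_top sequentially"
  shows "(\<lambda>n. conn_prob n (m n) (f n)) \<longlonglongrightarrow> 1"
proof -
  define S where "S n = moment_sum 1 n (m n) (f n)" for n
  define \<omega> where "\<omega> n = S n / real n - ln (real n)" for n
  define \<rho> where "\<rho> n = exp (2 - 3 * \<omega> n / 4)" for n
  have large: "eventually (\<lambda>n. Z \<le> \<omega> n) sequentially" for Z
    using lim unfolding filterlim_at_top \<omega>_def S_def by (rule spec)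
  have "filterlim (\<lambda>n. 2 - 3 * \<omega> n / 4) at_bot sequentially"
    unfolding filterlim_at_bot
  proof
    fix Z :: real
    show "eventually (\<lambda>n. 2 - 3 * \<omega> n / 4 \<le> Z) sequentially"
      using large[of "4 * (2 - Z) / 3"] by eventually_elim simp
  qed
  then have \<rho>: "\<rho> \<longlonglongrightarrow> 0" unfolding \<rho>_def by (rule filterlim_compose[OF exp_at_bot])
  have sqrt: "eventually (\<lambda>n. C * ln (real n) \<le> 2 * sqrt (real n)) sequentially"
    using C by (intro eventually_ln_le_sqrt) simp
  have "eventually (\<lambda>n. \<rho> n < 1/2) sequentially" using order_tendstoD(2)[OF \<rho>, of "1/2"] by simp
  then have upper: "eventually (\<lambda>n. 1 - conn_prob n (m n) (f n) \<le> 2 * \<rho> n + real n * exp (- real n)) sequentially"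
    using eventually_ge_at_top[of "1::nat"] large[of 0] large[of "C\<^sup>2 * (ln 2 + 1)"] sqrt S20
  proof eventually_elim
    case (elim n)
    have lnn: "0 \<le> ln (real n)" using elim by simp
    have "1 - conn_prob n (m n) (f n)
        \<le> (\<Sum>s=1..n div 2. exp (real s * (2 - 3 * \<omega> n / 4))) + real n * (2 ^ n * exp (- S n / C\<^sup>2))"
      using one_minus_conn_prob_le[OF d C] elim unfolding \<omega>_def S_def by simp
    also have "(\<Sum>s=1..n div 2. exp (real s * (2 - 3 * \<omega> n / 4))) \<le> 2 * \<rho> n"
      using sum_power_le_twice[of "\<rho> n" "n div 2"] elim
      unfolding \<rho>_def by (simp add: exp_of_nat_mult)
    also have "2 ^ n * exp (- S n / C\<^sup>2) \<le> exp (- real n)"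
    proof -
      have "real n * (C\<^sup>2 * (ln 2 + 1)) \<le> real n * (\<omega> n + ln (real n))"
        using \<open>C\<^sup>2 * (ln 2 + 1) \<le> \<omega> n\<close> lnn by (intro mult_left_mono) auto
      also have "\<dots> = S n" unfolding \<omega>_def using \<open>1 \<le> n\<close> by simp
      finally have "real n * (ln 2 + 1) \<le> S n / C\<^sup>2" using C by (simp add: field_simps)
      from two_pow_mult_exp_le[OF this] show ?thesis by simp
    qed
    finally show ?case by (simp add: mult_left_mono)
  qed
  have "(\<lambda>n. 2 * \<rho> n + real n * exp (- real n)) \<longlonglongrightarrow> 2 * 0 + 0"
    by (intro tendsto_intros \<rho> real_mult_exp_neg_tendsto_zero)
  moreover have "eventually (\<lambda>n. 0 \<le> 1 - conn_prob n (m n) (f n)) sequentially"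
    using conn_prob_bounds(2)[OF d] by simp
  ultimately have "(\<lambda>n. 1 - conn_prob n (m n) (f n)) \<longlonglongrightarrow> 0"
    using tendsto_sandwich[OF _ upper tendsto_const] by simp
  from tendsto_diff[OF tendsto_const[of 1] this] show ?thesis by simp
qed

lemma moment_bigo_imp_moment_sum_le:
  fixes m :: "nat \<Rightarrow> nat" and f :: "nat \<Rightarrow> nat \<Rightarrow> nat \<Rightarrow> real"
  assumes m_pos: "\<And>n. m n \<ge> 1" and d: "\<And>n k. k \<in> {1..m n} \<Longrightarrow> is_distr n (f n k)"
    and mom: "(\<lambda>n. moment 2 n (m n) (f n)) \<in> O(\<lambda>n. moment 0 n (m n) (f n))"
  obtains C where "1 \<le> C"
    and "eventually (\<lambda>n. moment_sum 2 n (m n) (f n) \<le> C * moment_sum 0 n (m n) (f n)) sequentially"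
proof -
  obtain c where c: "eventually (\<lambda>n. norm (moment 2 n (m n) (f n)) \<le> c * norm (moment 0 n (m n) (f n)))
      sequentially"
    using mom by (rule landau_o.bigE)
  have "eventually (\<lambda>n. moment_sum 2 n (m n) (f n) \<le> max c 1 * moment_sum 0 n (m n) (f n)) sequentially"
    using c
  proof eventually_elim
    case (elim n)
    have S: "0 \<le> moment_sum r n (m n) (f n)" for r using moment_sum_nonneg[where F = "f n", OF d] .
    have m: "0 < real (m n)" using m_pos[of n] by simp
    from elim have "moment_sum 2 n (m n) (f n) \<le> c * moment_sum 0 n (m n) (f n)"
      using S m by (simp add: moment_eq_moment_sum field_simps)
    also have "\<dots> \<le> max c 1 * moment_sum 0 n (m n) (f n)" using S by (intro mult_right_mono) auto
    finally show ?case .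
  qed
  then show ?thesis using that[of "max c 1"] by simp
qed

theorem mainTheorem5:
  fixes m :: "nat \<Rightarrow> nat" and f :: "nat \<Rightarrow> nat \<Rightarrow> nat \<Rightarrow> real"
  assumes m_pos: "\<And>n. m n \<ge> 1"
    and distr: "\<And>n k. k \<in> {1..m n} \<Longrightarrow> is_distr n (f n k)"
    and mom: "(\<lambda>n. moment 2 n (m n) (f n)) \<in> O(\<lambda>n. moment 0 n (m n) (f n))"
  shows "(filterlim (\<lambda>n. ln (real n) - real (m n) / real n * moment 1 n (m n) (f n)) at_top sequentially
            \<longrightarrow> (\<lambda>n. conn_prob n (m n) (f n)) \<longlonglongrightarrow> 0)
       \<and> (filterlim (\<lambda>n. ln (real n) - real (m n) / real n * moment 1 n (m n) (f n)) at_bot sequentially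
            \<longrightarrow> (\<lambda>n. conn_prob n (m n) (f n)) \<longlonglongrightarrow> 1)"
proof -
  obtain C where C: "1 \<le> C"
    and S20: "eventually (\<lambda>n. moment_sum 2 n (m n) (f n) \<le> C * moment_sum 0 n (m n) (f n)) sequentially"
    using moment_bigo_imp_moment_sum_le[OF m_pos distr mom] .
  have rate: "ln (real n) - real (m n) / real n * moment 1 n (m n) (f n)
      = - (moment_sum 1 n (m n) (f n) / real n - ln (real n))" for n
    using m_pos[of n] by (simp add: moment_eq_moment_sum)
  show ?thesis
  proof (intro conjI impI)
    assume "filterlim (\<lambda>n. ln (real n) - real (m n) / real n * moment 1 n (m n) (f n)) at_top sequentially"
    then have "filterlim (\<lambda>n. moment_sum 1 n (m n) (f n) / real n - ln (real n)) at_bot sequentially"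
      unfolding rate filterlim_uminus_at_bot .
    with C show "(\<lambda>n. conn_prob n (m n) (f n)) \<longlonglongrightarrow> 0"
      by (intro conn_prob_tendsto_zero[OF distr _ S20]) auto
  next
    assume "filterlim (\<lambda>n. ln (real n) - real (m n) / real n * moment 1 n (m n) (f n)) at_bot sequentially"
    then have "filterlim (\<lambda>n. moment_sum 1 n (m n) (f n) / real n - ln (real n)) at_top sequentially"
      unfolding rate filterlim_uminus_at_top .
    then show "(\<lambda>n. conn_prob n (m n) (f n)) \<longlonglongrightarrow> 1"
      using conn_prob_tendsto_one[OF distr C S20] by simp
  qed
qed

end
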